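(* Let $H$ be a right Hilbert module over a $C^*$-algebra and let $Q\in\mathcal{L}(H)$ be an idempotent. Then $$|Q^*|+|I-Q|=|Q|+|I-Q^*|,$$ and both sides have square equal to $I-Q-Q^*+QQ^*+Q^*Q$.
   Context: $\mathcal{L}(H)$ denotes the $C^*$-algebra of all adjointable operators on $H$, $I$ is the identity operator on $H$, $T^*$ is the adjoint of $T$, and $|T|=(T^*T)^{1/2}$ is the positive square root. $Q$ is an idempotent if $Q^2=Q$. *)

theory Defs
  imports "HOL-Analysis.Analysis"
begin

text \<open>The algebra L(H) of adjointable
operators on a Hilbert C*-module H is a unital C*-algebra, and every unital
C*-algebra A arises as L(A_A); so we state the result for an arbitrary unital
C*-algebra with unit 1 (playing the role of I) and involution adj (the adjoint).\<close>

class cstar_algebra = real_normed_algebra_1 + banach +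
  fixes scaleC :: "complex \<Rightarrow> 'a \<Rightarrow> 'a"
    and adj :: "'a \<Rightarrow> 'a"
  assumes scaleC_of_real: "scaleC (complex_of_real r) x = scaleR r x"
    and scaleC_add_right: "scaleC a (x + y) = scaleC a x + scaleC a y"
    and scaleC_add_left: "scaleC (a + b) x = scaleC a x + scaleC b x"
    and scaleC_scaleC: "scaleC a (scaleC b x) = scaleC (a * b) x"
    and scaleC_one: "scaleC 1 x = x"
    and norm_scaleC: "norm (scaleC a x) = cmod a * norm x"
    and mult_scaleC_left: "scaleC a x * y = scaleC a (x * y)"
    and mult_scaleC_right: "x * scaleC a y = scaleC a (x * y)"
    and adj_adj: "adj (adj x) = x"
    and adj_add: "adj (x + y) = adj x + adj y"
    and adj_mult: "adj (x * y) = adj y * adj x"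
    and adj_scaleC: "adj (scaleC a x) = scaleC (cnj a) (adj x)"
    and cstar_identity: "norm (adj x * x) = (norm x)\<^sup>2"

definition cinvertible :: "'a::cstar_algebra \<Rightarrow> bool" where
  "cinvertible a \<longleftrightarrow> (\<exists>b. a * b = 1 \<and> b * a = 1)"

definition cspectrum :: "'a::cstar_algebra \<Rightarrow> complex set" where
  "cspectrum a = {c. \<not> cinvertible (a - scaleC c 1)}"

definition cpositive :: "'a::cstar_algebra \<Rightarrow> bool" where
  "cpositive a \<longleftrightarrow> adj a = a \<and> cspectrum a \<subseteq> complex_of_real ` {0..}"

definition cabs :: "'a::cstar_algebra \<Rightarrow> 'a" where
  "cabs t = (THE p. cpositive p \<and> p * p = adj t * t)"

end

theory Submission
  imports Defs "HOL-Complex_Analysis.Complex_Analysis"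
begin

(*
  With S = Q + Q^* - 1, which is self-adjoint and invertible with S^2 = I - Q - Q^* + QQ^* + Q^*Q,
  the range projection P = Q S^-1 of Q commutes with |S|.  The elements |S| P and |S| (I - P)
  are positive and square to S^2 P = QQ^* and S^2 (I - P) = (I - Q)^* (I - Q), so by uniqueness
  of positive square roots they are |Q^*| and |I - Q|; hence |Q^*| + |I - Q| = |S|.  The
  idempotent Q^* has the same S, which gives |Q| + |I - Q^*| = |S| as well.

  Positivity being defined through the spectrum, existence (binomial series) and uniqueness
  of positive square roots rest on the fact that the norm of a self-adjoint element is its
  spectral radius; this follows from Cauchy estimates for the resolvent, made scalar by a
  Hahn-Banach norming functional.
*)

section \<open>Scalars and the involution\<close>

lemma scaleC_zero_right [simp]: "scaleC a (0::'a::cstar_algebra) = 0"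
  using scaleC_add_right[of a "0::'a" 0] by simp

lemma scaleC_zero_left [simp]: "scaleC 0 (x::'a::cstar_algebra) = 0"
  using scaleC_add_left[of 0 0 x] by simp

lemma scaleC_minus_right: "scaleC a (- x::'a::cstar_algebra) = - scaleC a x"
  using scaleC_add_right[of a "-x" x] by (simp add: eq_neg_iff_add_eq_0)

lemma scaleC_minus_left: "scaleC (- a) (x::'a::cstar_algebra) = - scaleC a x"
  using scaleC_add_left[of "-a" a x] by (simp add: eq_neg_iff_add_eq_0)

lemma scaleC_diff_right: "scaleC a (x - y::'a::cstar_algebra) = scaleC a x - scaleC a y"
  using scaleC_add_right[of a x "-y"] by (simp add: scaleC_minus_right)

lemma scaleC_diff_left: "scaleC (a - b) (x::'a::cstar_algebra) = scaleC a x - scaleC b x"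
  using scaleC_add_left[of a "-b" x] by (simp add: scaleC_minus_left)

lemma scaleC_power: "scaleC u (x::'a::cstar_algebra) ^ k = scaleC (u ^ k) (x ^ k)"
  by (induction k) (simp_all add: scaleC_one mult_scaleC_left mult_scaleC_right scaleC_scaleC mult.commute)

lemma bounded_linear_scaleC_left: "bounded_linear (\<lambda>c. scaleC c (x::'a::cstar_algebra))"
proof (rule bounded_linear_intro[where K="norm x"])
  show "scaleC (r *\<^sub>R c) x = r *\<^sub>R scaleC c x" for r c
    by (simp add: scaleR_conv_of_real scaleC_scaleC[symmetric] scaleC_of_real)
qed (simp_all add: scaleC_add_left norm_scaleC)

lemma scaleC_eq_Re_Im: "scaleC c (x::'a::cstar_algebra) = Re c *\<^sub>R x + Im c *\<^sub>R scaleC \<i> x"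
proof -
  have "c = complex_of_real (Re c) + complex_of_real (Im c) * \<i>"
    by (simp add: complex_eq_iff)
  then have "scaleC c x = scaleC (complex_of_real (Re c)) x + scaleC (complex_of_real (Im c)) (scaleC \<i> x)"
    by (metis scaleC_add_left scaleC_scaleC)
  then show ?thesis by (simp only: scaleC_of_real)
qed

abbreviation of_complex :: "complex \<Rightarrow> 'a::cstar_algebra" where
  "of_complex c \<equiv> scaleC c 1"

lemma of_complex_commute: "of_complex c * (x::'a::cstar_algebra) = x * of_complex c"
  by (simp add: mult_scaleC_left mult_scaleC_right)

lemma of_complex_mult: "(of_complex c :: 'a::cstar_algebra) * of_complex d = of_complex (c * d)"
  by (simp add: mult_scaleC_left scaleC_scaleC)

lemma of_complex_of_real: "(of_complex (complex_of_real r) :: 'a::cstar_algebra) = of_real r"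
  by (rule trans[OF scaleC_of_real]) (simp add: of_real_def)

lemma of_complex_add: "(of_complex (c + d) :: 'a::cstar_algebra) = of_complex c + of_complex d"
  by (rule scaleC_add_left)

lemma of_complex_diff: "(of_complex (c - d) :: 'a::cstar_algebra) = of_complex c - of_complex d"
  by (rule scaleC_diff_left)

lemma norm_of_complex: "norm (of_complex c :: 'a::cstar_algebra) = cmod c"
  by (simp add: norm_scaleC)

lemma adj_zero [simp]: "adj (0::'a::cstar_algebra) = 0"
  using adj_add[of "0::'a" 0] by simp

lemma adj_minus: "adj (- x::'a::cstar_algebra) = - adj x"
  using adj_add[of "-x" x] by (simp add: eq_neg_iff_add_eq_0)

lemma adj_diff: "adj (x - y::'a::cstar_algebra) = adj x - adj y"
  using adj_add[of x "-y"] by (simp add: adj_minus)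

lemma adj_one [simp]: "adj (1::'a::cstar_algebra) = 1"
  using adj_mult[of "adj (1::'a)" 1] by (simp add: adj_adj)

lemma adj_scaleR: "adj (r *\<^sub>R x::'a::cstar_algebra) = r *\<^sub>R adj x"
  by (metis adj_scaleC complex_cnj_complex_of_real scaleC_of_real)

lemma adj_of_real [simp]: "adj (of_real r :: 'a::cstar_algebra) = of_real r"
  by (simp add: of_real_def adj_scaleR)

lemma adj_of_complex: "adj (of_complex c :: 'a::cstar_algebra) = of_complex (cnj c)"
  by (simp add: adj_scaleC)

lemma adj_power: "adj ((x::'a::cstar_algebra) ^ n) = adj x ^ n"
  by (induction n) (simp_all add: adj_mult power_commutes)

lemma bounded_linear_adj: "bounded_linear (adj :: 'a::cstar_algebra \<Rightarrow> 'a)"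
proof -
  have "norm y \<le> norm (adj y)" for y :: 'a
  proof (cases "y = 0")
    case False
    have "norm y * norm y = norm (adj y * y)" by (simp add: cstar_identity power2_eq_square)
    also have "\<dots> \<le> norm (adj y) * norm y" by (rule norm_mult_ineq)
    finally show ?thesis using False by simp
  qed simp
  from this[of "adj x" for x] show ?thesis
    by (intro bounded_linear_intro[where K=1]) (simp_all add: adj_add adj_scaleR adj_adj)
qed

lemma norm_square_self_adjoint:
  "adj (h::'a::cstar_algebra) = h \<Longrightarrow> norm (h * h) = (norm h)\<^sup>2"
  using cstar_identity[of h] by simp

lemma self_adjoint_zero_iff_square_zero:
  "adj (h::'a::cstar_algebra) = h \<Longrightarrow> h * h = 0 \<longleftrightarrow> h = 0"
  using norm_square_self_adjoint[of h] by auto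

lemma norm_power2_self_adjoint:
  fixes h :: "'a::cstar_algebra"
  assumes "adj h = h"
  shows "norm (h ^ 2 ^ m) = norm h ^ 2 ^ m"
proof (induction m)
  case (Suc m)
  have "h ^ 2 ^ Suc m = h ^ 2 ^ m * h ^ 2 ^ m"
    by (simp add: power_add[symmetric] mult_2)
  moreover have "adj (h ^ 2 ^ m) = h ^ 2 ^ m" by (simp add: adj_power assms)
  ultimately have "norm (h ^ 2 ^ Suc m) = (norm (h ^ 2 ^ m))\<^sup>2"
    using norm_square_self_adjoint by simp
  then show ?case using Suc by (simp add: power_mult[symmetric] mult.commute)
qed simp

section \<open>Invertible elements\<close>

definition cinv :: "'a::cstar_algebra \<Rightarrow> 'a" where
  "cinv a = (SOME b. a * b = 1 \<and> b * a = 1)"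

lemma cinv_inverse [simp]:
  assumes "cinvertible a"
  shows "a * cinv a = 1" "cinv a * a = 1"
proof -
  from assms obtain b where "a * b = 1 \<and> b * a = 1" unfolding cinvertible_def by blast
  then have "a * cinv a = 1 \<and> cinv a * a = 1" unfolding cinv_def by (rule someI)
  then show "a * cinv a = 1" "cinv a * a = 1" by auto
qed

lemma left_inverse_eq_right_inverse:
  fixes a l r :: "'a::cstar_algebra"
  assumes "l * a = 1" "a * r = 1"
  shows "l = r"
proof -
  have "l = l * (a * r)" using assms(2) by simp
  also have "\<dots> = r" using assms(1) by (simp flip: mult.assoc)
  finally show ?thesis .
qed

lemma cinvertibleI:
  fixes a l r :: "'a::cstar_algebra"
  assumes "l * a = 1" "a * r = 1"
  shows "cinvertible a"
  using assms left_inverse_eq_right_inverse[OF assms] unfolding cinvertible_def by blast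

lemma cinv_unique:
  fixes a b :: "'a::cstar_algebra"
  assumes "a * b = 1" "b * a = 1"
  shows "cinv a = b"
  using left_inverse_eq_right_inverse[OF cinv_inverse(2) assms(1)] cinvertibleI[OF assms(2,1)] by simp

lemma cinvertible_mult:
  fixes a b :: "'a::cstar_algebra"
  assumes "cinvertible a" "cinvertible b"
  shows "cinvertible (a * b)"
proof (rule cinvertibleI)
  have "(cinv b * cinv a) * (a * b) = cinv b * (cinv a * a) * b" by (simp only: mult.assoc)
  then show "(cinv b * cinv a) * (a * b) = 1" using assms by simp
  have "(a * b) * (cinv b * cinv a) = a * (b * cinv b) * cinv a" by (simp only: mult.assoc)
  then show "(a * b) * (cinv b * cinv a) = 1" using assms by simp
qed

lemma cinvertible_one [simp]: "cinvertible (1::'a::cstar_algebra)"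
  unfolding cinvertible_def by auto

lemma cinvertible_scaleC:
  fixes a :: "'a::cstar_algebra"
  assumes "cinvertible a" "c \<noteq> 0"
  shows "cinvertible (scaleC c a)"
  by (rule cinvertibleI[where l = "scaleC (inverse c) (cinv a)" and r = "scaleC (inverse c) (cinv a)"])
     (use assms in \<open>simp_all add: mult_scaleC_left mult_scaleC_right scaleC_scaleC scaleC_one\<close>)

lemma cinvertible_uminus:
  fixes a :: "'a::cstar_algebra"
  assumes "cinvertible a"
  shows "cinvertible (- a)"
  using cinvertibleI[of "- cinv a" "- a" "- cinv a"] assms by simp

lemma cinvertible_square_imp_cinvertible:
  fixes a :: "'a::cstar_algebra"
  assumes "cinvertible (a * a)"
  shows "cinvertible a"
proof (rule cinvertibleI)
  show "(cinv (a * a) * a) * a = 1" using assms by (simp add: mult.assoc)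
  show "a * (a * cinv (a * a)) = 1" using assms by (simp flip: mult.assoc)
qed

lemma cinv_intertwine:
  fixes s x y :: "'a::cstar_algebra"
  assumes "cinvertible s" "s * x = y * s"
  shows "cinv s * y = x * cinv s"
proof -
  have "cinv s * y = cinv s * y * (s * cinv s)" using assms(1) by simp
  also have "\<dots> = cinv s * (s * x) * cinv s" using assms(2) by (simp add: mult.assoc)
  also have "\<dots> = x * cinv s" using assms(1) by (simp flip: mult.assoc)
  finally show ?thesis .
qed

lemma adj_cinv:
  fixes a :: "'a::cstar_algebra"
  assumes "cinvertible a"
  shows "adj (cinv a) = cinv (adj a)"
  using arg_cong[OF cinv_inverse(1)[OF assms], of adj] arg_cong[OF cinv_inverse(2)[OF assms], of adj]
  by (intro cinv_unique[symmetric]) (simp_all add: adj_mult)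

lemma resolvent_identity:
  fixes a b :: "'a::cstar_algebra"
  assumes "cinvertible a" "cinvertible b"
  shows "cinv a - cinv b = cinv a * (b - a) * cinv b"
  using assms by (simp add: algebra_simps mult.assoc)

lemma neumann_series:
  fixes x :: "'a::cstar_algebra"
  assumes "norm x < 1"
  shows "summable (\<lambda>n. x ^ n)" "cinvertible (1 - x)" "cinv (1 - x) = (\<Sum>n. x ^ n)"
    "norm (cinv (1 - x)) \<le> 1 / (1 - norm x)"
proof -
  have geom: "summable (\<lambda>n. norm x ^ n)" using assms by (simp add: summable_geometric)
  have sn: "summable (\<lambda>n. norm (x ^ n))"
    by (rule summable_comparison_test'[OF geom]) (simp add: norm_power_ineq)
  show s: "summable (\<lambda>n. x ^ n)" using sn by (rule summable_norm_cancel)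
  define S where "S = (\<Sum>n. x ^ n)"
  have "(\<Sum>n. x ^ Suc n) = S - 1" unfolding S_def using suminf_split_head[OF s] by simp
  then have "x * S = S - 1" "S * x = S - 1"
    unfolding S_def using suminf_mult[OF s, of x] suminf_mult2[OF s, of x]
    by (simp_all add: power_commutes)
  then have a: "(1 - x) * S = 1" and b: "S * (1 - x) = 1" by (simp_all add: algebra_simps)
  show "cinvertible (1 - x)" using cinvertibleI[OF b a] .
  show inv: "cinv (1 - x) = S" using cinv_unique[OF a b] .
  have "norm S \<le> (\<Sum>n. norm (x ^ n))" unfolding S_def by (rule summable_norm[OF sn])
  also have "\<dots> \<le> (\<Sum>n. norm x ^ n)"
    by (rule suminf_le[OF norm_power_ineq sn geom])
  also have "\<dots> = 1 / (1 - norm x)" using assms by (simp add: suminf_geometric)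
  finally show "norm (cinv (1 - x)) \<le> 1 / (1 - norm x)" using inv by simp
qed

lemma cinvertible_perturb:
  fixes a e :: "'a::cstar_algebra"
  assumes inv: "cinvertible a" and small: "norm e * norm (cinv a) < 1"
  shows "cinvertible (a + e)"
    "norm (cinv (a + e) - cinv a) \<le> norm (cinv a) ^ 2 * norm e / (1 - norm e * norm (cinv a))"
proof -
  define b where "b = cinv a"
  have be: "norm (b * e) \<le> norm e * norm b"
    using norm_mult_ineq[of b e] by (simp add: mult.commute)
  then have nbe: "norm (- (b * e)) < 1" using small b_def by simp
  define W where "W = cinv (1 - - (b * e))"
  have W: "(1 + b * e) * W = 1" "W * (1 + b * e) = 1"
    using cinv_inverse[OF neumann_series(2)[OF nbe]] W_def by auto
  have "a + e = a * (1 + b * e)" using inv b_def by (simp add: algebra_simps flip: mult.assoc)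
  then have "(a + e) * (W * b) = a * ((1 + b * e) * W) * b" by (simp add: mult.assoc)
  then have i1: "(a + e) * (W * b) = 1" using inv W b_def by simp
  have "b * (a + e) = 1 + b * e" using inv b_def by (simp add: algebra_simps)
  then have i2: "(W * b) * (a + e) = 1" using W by (simp add: mult.assoc)
  show "cinvertible (a + e)" using cinvertibleI[OF i2 i1] .
  have "W - 1 = - (W * (b * e))"
    using W(2) by (simp add: algebra_simps)
  moreover have "cinv (a + e) - cinv a = (W - 1) * b"
    using cinv_unique[OF i1 i2] b_def by (simp add: algebra_simps)
  ultimately have "cinv (a + e) - cinv a = - (W * (b * e) * b)" by simp
  then have "norm (cinv (a + e) - cinv a) = norm (W * (b * e) * b)" by simp
  also have "\<dots> \<le> norm W * norm (b * e) * norm b"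
    by (metis mult_right_mono norm_ge_zero norm_mult_ineq order_trans)
  also have "\<dots> \<le> norm W * (norm e * norm b) * norm b"
    using be by (intro mult_right_mono mult_left_mono) auto
  also have "\<dots> \<le> (1 / (1 - norm e * norm b)) * (norm e * norm b) * norm b"
  proof -
    have "norm W \<le> 1 / (1 - norm (b * e))" using neumann_series(4)[OF nbe] W_def by simp
    also have "\<dots> \<le> 1 / (1 - norm e * norm b)"
      using be small b_def by (intro divide_left_mono) auto
    finally show ?thesis by (intro mult_right_mono) auto
  qed
  also have "\<dots> = norm (cinv a) ^ 2 * norm e / (1 - norm e * norm (cinv a))"
    using b_def by (simp add: power2_eq_square field_simps)
  finally show "norm (cinv (a + e) - cinv a) \<le> norm (cinv a) ^ 2 * norm e / (1 - norm e * norm (cinv a))" .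
qed

lemma isCont_cinv:
  fixes a :: "'a::cstar_algebra"
  assumes inv: "cinvertible a"
  shows "isCont cinv a"
proof -
  define K where "K = norm (cinv a) + 1"
  have K: "K > 0" "norm (cinv a) < K" unfolding K_def using norm_ge_zero[of "cinv a"] by linarith+
  have "\<exists>s>0. \<forall>e. e \<noteq> 0 \<and> norm (e - 0) < s \<longrightarrow> norm (cinv (a + e) - cinv a) < r"
    if r: "r > 0" for r
  proof (intro exI[of _ "min (1 / (2 * K)) (r / (4 * K * K))"] conjI allI impI)
    show "min (1 / (2 * K)) (r / (4 * K * K)) > 0" using K r by auto
    fix e :: 'a assume "e \<noteq> 0 \<and> norm (e - 0) < min (1 / (2 * K)) (r / (4 * K * K))"
    then have ne: "norm e < min (1 / (2 * K)) (r / (4 * K * K))" by simp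
    have half: "norm e * norm (cinv a) \<le> 1/2"
    proof -
      have "norm e * norm (cinv a) \<le> (1 / (2 * K)) * K" using ne K by (intro mult_mono) auto
      then show ?thesis using K by simp
    qed
    have "norm (cinv (a + e) - cinv a) \<le> norm (cinv a) ^ 2 * norm e / (1 - norm e * norm (cinv a))"
      using cinvertible_perturb(2)[OF inv] half by simp
    also have "\<dots> \<le> norm (cinv a) ^ 2 * norm e / (1/2)"
      using half by (intro divide_left_mono) auto
    also have "\<dots> \<le> r / 2"
    proof -
      have "norm (cinv a) ^ 2 * norm e \<le> K^2 * (r / (4 * K * K))"
        using K ne by (intro mult_mono power_mono) auto
      also have "\<dots> = r / 4" using K by (simp add: power2_eq_square)
      finally show ?thesis by simp
    qed
    finally show "norm (cinv (a + e) - cinv a) < r" using r by simp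
  qed
  then have "(\<lambda>e. cinv (a + e)) \<midarrow>0\<rightarrow> cinv a" unfolding LIM_eq by simp
  then show ?thesis unfolding isCont_def by (rule LIM_offset_zero_cancel)
qed

section \<open>Spectrum and positivity\<close>

lemma not_in_cspectrum_iff: "c \<notin> cspectrum x \<longleftrightarrow> cinvertible (x - of_complex c)"
  unfolding cspectrum_def by simp

lemma cinvertible_minus_of_complex:
  fixes x :: "'a::cstar_algebra"
  assumes "norm x < cmod c"
  shows "cinvertible (x - of_complex c)"
proof -
  have c0: "c \<noteq> 0" using assms norm_ge_zero[of x] by auto
  have "norm (scaleC (inverse c) x) = norm x / cmod c"
    by (simp add: norm_scaleC norm_inverse divide_inverse mult.commute)
  then have "norm (scaleC (inverse c) x) < 1"
    using assms c0 by (simp add: divide_less_eq)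
  moreover have "x - of_complex c = scaleC (- c) (1 - scaleC (inverse c) x)"
    using c0 by (simp add: scaleC_diff_right scaleC_scaleC scaleC_minus_left scaleC_one)
  ultimately show ?thesis using cinvertible_scaleC[OF neumann_series(2), of _ "-c"] c0 by simp
qed

lemma cspectrum_norm_le: "c \<in> cspectrum (x::'a::cstar_algebra) \<Longrightarrow> cmod c \<le> norm x"
  using cinvertible_minus_of_complex[of x c] not_in_cspectrum_iff by force

lemma norm_self_adjoint_plus_imaginary:
  fixes d :: "'a::cstar_algebra"
  assumes sa: "adj d = d"
  shows "(norm (d + of_complex (\<i> * t)))\<^sup>2 \<le> (norm d)\<^sup>2 + t\<^sup>2"
proof -
  define e :: 'a where "e = of_complex (\<i> * t)"
  have "adj (d + e) * (d + e) = (d - e) * (d + e)"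
    unfolding e_def by (simp add: adj_add sa adj_of_complex scaleC_minus_left)
  also have "\<dots> = d * d - e * e"
    using of_complex_commute[of "\<i> * t" d] unfolding e_def by (simp add: algebra_simps)
  also have "e * e = - of_complex (t\<^sup>2)"
  proof -
    have "(\<i> * t) * (\<i> * t) = - complex_of_real (t\<^sup>2)"
      by (simp add: complex_eq_iff power2_eq_square)
    then show ?thesis unfolding e_def by (simp add: of_complex_mult scaleC_minus_left)
  qed
  finally have "adj (d + e) * (d + e) = d * d + of_complex (t\<^sup>2)" by simp
  then have "(norm (d + e))\<^sup>2 = norm (d * d + of_complex (t\<^sup>2))" by (metis cstar_identity)
  also have "\<dots> \<le> norm (d * d) + norm (of_complex (t\<^sup>2) :: 'a)" by (rule norm_triangle_ineq)
  finally show ?thesis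
    unfolding e_def by (simp add: norm_of_complex norm_square_self_adjoint[OF sa] norm_power
        del: of_real_power)
qed

text \<open>If \<open>\<alpha> + \<i>\<beta>\<close> lies in the spectrum of \<open>h\<close>, then \<open>\<i>(\<beta> + t)\<close> lies in the spectrum of
  \<open>(h - \<alpha>) + \<i>t\<close> for every real \<open>t\<close>; the norm bound for the latter is incompatible with
  \<open>\<beta> \<noteq> 0\<close> for \<open>t = \<parallel>h - \<alpha>\<parallel>\<^sup>2 / (2\<beta>)\<close>.\<close>

lemma self_adjoint_cspectrum_real:
  fixes h :: "'a::cstar_algebra"
  assumes sa: "adj h = h" and c: "c \<in> cspectrum h"
  shows "Im c = 0"
proof (rule ccontr)
  assume \<beta>: "Im c \<noteq> 0"
  define d where "d = h - of_real (Re c)"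
  have sad: "adj d = d" unfolding d_def by (simp add: adj_diff sa)
  have bound: "(Im c + t)\<^sup>2 \<le> (norm d)\<^sup>2 + t\<^sup>2" for t :: real
  proof -
    have "c = complex_of_real (Re c) - \<i> * t + \<i> * (Im c + t)"
      by (simp add: complex_eq_iff)
    then have "(of_complex c :: 'a)
        = of_complex (complex_of_real (Re c)) - of_complex (\<i> * t) + of_complex (\<i> * (Im c + t))"
      by (simp only: of_complex_add[symmetric] of_complex_diff[symmetric])
    then have "h - of_complex c = (d + of_complex (\<i> * t)) - of_complex (\<i> * (Im c + t))"
      unfolding d_def of_complex_of_real by (simp add: algebra_simps)
    then have "\<i> * (Im c + t) \<in> cspectrum (d + of_complex (\<i> * t))"
      using c unfolding cspectrum_def by simp
    then have "cmod (\<i> * (Im c + t)) \<le> norm (d + of_complex (\<i> * t))"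
      by (rule cspectrum_norm_le)
    then have "\<bar>Im c + t\<bar>\<^sup>2 \<le> (norm (d + of_complex (\<i> * t)))\<^sup>2"
      by (intro power_mono) (simp_all add: norm_mult del: of_real_add)
    then have "(Im c + t)\<^sup>2 \<le> (norm (d + of_complex (\<i> * t)))\<^sup>2" by simp
    then show ?thesis using norm_self_adjoint_plus_imaginary[OF sad, of t] by linarith
  qed
  define t where "t = (norm d)\<^sup>2 / (2 * Im c)"
  have "(Im c + t)\<^sup>2 = (Im c)\<^sup>2 + (norm d)\<^sup>2 + t\<^sup>2"
    unfolding t_def using \<beta> by (simp add: power2_eq_square field_simps)
  with bound[of t] have "(Im c)\<^sup>2 \<le> 0" by linarith
  then show False using \<beta> by simp
qed

lemma cpositiveI:
  fixes p :: "'a::cstar_algebra"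
  assumes "adj p = p" "\<And>c. c \<notin> complex_of_real ` {0..} \<Longrightarrow> cinvertible (p - of_complex c)"
  shows "cpositive p"
  using assms unfolding cpositive_def cspectrum_def by auto

lemma cpositive_self_adjoint: "cpositive p \<Longrightarrow> adj p = p"
  unfolding cpositive_def by simp

lemma cpositive_cinvertible:
  fixes p :: "'a::cstar_algebra"
  assumes "cpositive p" "c \<notin> complex_of_real ` {0..}"
  shows "cinvertible (p - of_complex c)"
  using assms unfolding cpositive_def cspectrum_def by auto

lemma cpositive_zero: "cpositive (0::'a::cstar_algebra)"
proof (rule cpositiveI)
  fix c :: complex assume "c \<notin> complex_of_real ` {0..}"
  then have "cinvertible (scaleC (- c) (1::'a))" by (intro cinvertible_scaleC) force+
  then show "cinvertible (0 - of_complex c :: 'a)" by (simp add: scaleC_minus_left)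
qed simp

lemma cpositive_scaleR:
  fixes p :: "'a::cstar_algebra"
  assumes pos: "cpositive p" and s: "s > 0"
  shows "cpositive (s *\<^sub>R p)"
proof (rule cpositiveI)
  show "adj (s *\<^sub>R p) = s *\<^sub>R p" using pos by (simp add: adj_scaleR cpositive_self_adjoint)
  fix c :: complex assume c: "c \<notin> complex_of_real ` {0..}"
  have "c / complex_of_real s \<notin> complex_of_real ` {0..}"
  proof
    assume "c / complex_of_real s \<in> complex_of_real ` {0..}"
    then obtain u where "c / complex_of_real s = complex_of_real u" "u \<ge> 0" by auto
    then have "c = complex_of_real (s * u)" "s * u \<ge> 0" using s by (simp_all add: field_simps)
    then show False using c by blast
  qed
  then have "cinvertible (scaleC (complex_of_real s) (p - of_complex (c / complex_of_real s)))"
    using s by (intro cinvertible_scaleC cpositive_cinvertible[OF pos]) auto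
  then show "cinvertible (s *\<^sub>R p - of_complex c)"
    using s by (simp add: scaleC_diff_right scaleC_scaleC scaleC_of_real)
qed

lemma cpositive_square:
  fixes w :: "'a::cstar_algebra"
  assumes sa: "adj w = w"
  shows "cpositive (w * w)"
proof (rule cpositiveI)
  show "adj (w * w) = w * w" by (simp add: adj_mult sa)
  fix c assume c: "c \<notin> complex_of_real ` {0..}"
  show "cinvertible (w * w - of_complex c)"
  proof (cases "Im c = 0")
    case False
    then show ?thesis
      unfolding not_in_cspectrum_iff[symmetric]
      using self_adjoint_cspectrum_real[of "w * w" c] by (auto simp: adj_mult sa)
  next
    case True
    define g where "g = sqrt (- Re c)"
    have "Re c < 0"
    proof (rule ccontr)
      assume "\<not> Re c < 0"
      then have "c \<in> complex_of_real ` {0..}"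
        using True by (intro image_eqI[of _ _ "Re c"]) (auto simp: complex_eq_iff)
      then show False using c by simp
    qed
    then have g: "g \<noteq> 0" and cg: "c = (\<i> * g) * (\<i> * g)"
      using True by (simp_all add: g_def complex_eq_iff)
    have inv: "cinvertible (w - of_complex z)" if "Im z \<noteq> 0" for z
      unfolding not_in_cspectrum_iff[symmetric] using self_adjoint_cspectrum_real[OF sa, of z] that
      by blast
    have "(w - of_complex (\<i> * g)) * (w - of_complex (- (\<i> * g))) = w * w - of_complex c"
      using of_complex_commute[of "\<i> * g" w]
      by (simp add: algebra_simps scaleC_minus_left of_complex_mult cg)
    moreover have "cinvertible ((w - of_complex (\<i> * g)) * (w - of_complex (- (\<i> * g))))"
      using g by (intro cinvertible_mult inv) auto
    ultimately show ?thesis by simp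
  qed
qed

section \<open>A Hahn--Banach norming functional\<close>

text \<open>Partial real-linear functionals dominated by the norm and attaining \<open>\<parallel>y\<parallel>\<close> at \<open>y\<close>,
  represented by their graphs so that Zorn's lemma can be applied to set inclusion.\<close>

definition norming_graph :: "'a::real_normed_vector \<Rightarrow> ('a \<times> real) set \<Rightarrow> bool" where
  "norming_graph y G \<longleftrightarrow> (\<forall>a u v. (a, u) \<in> G \<longrightarrow> (a, v) \<in> G \<longrightarrow> u = v)
     \<and> (\<forall>a u b v. (a, u) \<in> G \<longrightarrow> (b, v) \<in> G \<longrightarrow> (a + b, u + v) \<in> G)
     \<and> (\<forall>a u r. (a, u) \<in> G \<longrightarrow> (r *\<^sub>R a, r * u) \<in> G)
     \<and> (\<forall>a u. (a, u) \<in> G \<longrightarrow> u \<le> norm a)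
     \<and> (y, norm y) \<in> G"

lemma norming_graphD:
  assumes "norming_graph y G"
  shows "\<And>a u v. (a, u) \<in> G \<Longrightarrow> (a, v) \<in> G \<Longrightarrow> u = v"
    "\<And>a u b v. (a, u) \<in> G \<Longrightarrow> (b, v) \<in> G \<Longrightarrow> (a + b, u + v) \<in> G"
    "\<And>a u r. (a, u) \<in> G \<Longrightarrow> (r *\<^sub>R a, r * u) \<in> G"
    "\<And>a u. (a, u) \<in> G \<Longrightarrow> u \<le> norm a"
    "(y, norm y) \<in> G"
  using assms unfolding norming_graph_def by blast+

lemma norming_graph_zero: "norming_graph y G \<Longrightarrow> (0, 0) \<in> G"
  using norming_graphD(3)[of y G y "norm y" 0] norming_graphD(5)[of y G] by simp

lemma norming_graph_line: "norming_graph y {(r *\<^sub>R y, r * norm y) | r. True}"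
  unfolding norming_graph_def
proof (intro conjI allI impI)
  fix a u v assume "(a, u) \<in> {(r *\<^sub>R y, r * norm y) | r. True}" "(a, v) \<in> {(r *\<^sub>R y, r * norm y) | r. True}"
  then obtain r s where "a = r *\<^sub>R y" "u = r * norm y" "a = s *\<^sub>R y" "v = s * norm y" by blast
  then show "u = v" by (cases "y = 0") (auto simp: scaleR_cancel_right)
next
  fix a u b v assume "(a, u) \<in> {(r *\<^sub>R y, r * norm y) | r. True}" "(b, v) \<in> {(r *\<^sub>R y, r * norm y) | r. True}"
  then obtain r s where "a = r *\<^sub>R y" "u = r * norm y" "b = s *\<^sub>R y" "v = s * norm y" by blast
  then have "a + b = (r + s) *\<^sub>R y" "u + v = (r + s) * norm y" by (simp_all add: algebra_simps)
  then show "(a + b, u + v) \<in> {(r *\<^sub>R y, r * norm y) | r. True}" by blast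
next
  fix a u t assume "(a, u) \<in> {(r *\<^sub>R y, r * norm y) | r. True}"
  then obtain r where "a = r *\<^sub>R y" "u = r * norm y" by blast
  then have "t *\<^sub>R a = (t * r) *\<^sub>R y" "t * u = (t * r) * norm y" by simp_all
  then show "(t *\<^sub>R a, t * u) \<in> {(r *\<^sub>R y, r * norm y) | r. True}" by blast
next
  fix a u assume "(a, u) \<in> {(r *\<^sub>R y, r * norm y) | r. True}"
  then obtain r where "a = r *\<^sub>R y" "u = r * norm y" by blast
  then show "u \<le> norm a" by (simp add: mult_right_mono)
next
  show "(y, norm y) \<in> {(r *\<^sub>R y, r * norm y) | r. True}"
    using exI[of "\<lambda>r. y = r *\<^sub>R y \<and> norm y = r * norm y" 1] by simp
qed

lemma norming_graph_Union_chain: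
  assumes C: "C \<in> chains {G. norming_graph y G}" and ne: "C \<noteq> {}"
  shows "norming_graph y (\<Union>C)"
proof -
  have good: "\<And>X. X \<in> C \<Longrightarrow> norming_graph y X" using C unfolding chains_def by blast
  have common: "\<exists>X\<in>C. p \<in> X \<and> q \<in> X" if "p \<in> \<Union>C" "q \<in> \<Union>C" for p q
    using that C unfolding chains_def chain_subset_def by blast
  show ?thesis
    unfolding norming_graph_def
  proof (intro conjI allI impI)
    fix a u v assume "(a, u) \<in> \<Union>C" "(a, v) \<in> \<Union>C"
    then obtain X where "X \<in> C" "(a, u) \<in> X" "(a, v) \<in> X" using common by blast
    then show "u = v" by (intro norming_graphD(1)[OF good])
  next
    fix a u b v assume "(a, u) \<in> \<Union>C" "(b, v) \<in> \<Union>C"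
    then obtain X where "X \<in> C" "(a, u) \<in> X" "(b, v) \<in> X" using common by blast
    then have "(a + b, u + v) \<in> X" by (intro norming_graphD(2)[OF good])
    then show "(a + b, u + v) \<in> \<Union>C" using \<open>X \<in> C\<close> by blast
  next
    fix a u r assume "(a, u) \<in> \<Union>C"
    then obtain X where "X \<in> C" "(a, u) \<in> X" by blast
    then have "(r *\<^sub>R a, r * u) \<in> X" by (intro norming_graphD(3)[OF good])
    then show "(r *\<^sub>R a, r * u) \<in> \<Union>C" using \<open>X \<in> C\<close> by blast
  next
    fix a u assume "(a, u) \<in> \<Union>C"
    then obtain X where "X \<in> C" "(a, u) \<in> X" by blast
    then show "u \<le> norm a" by (intro norming_graphD(4)[OF good])
  next
    obtain X where "X \<in> C" using ne by blast
    then show "(y, norm y) \<in> \<Union>C" using norming_graphD(5)[OF good] by blast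
  qed
qed

lemma norming_graph_extension_dominated:
  fixes z :: "'a::real_normed_vector"
  assumes good: "norming_graph y M" and aw: "(a, w) \<in> M"
    and c_ge: "\<And>b v. (b, v) \<in> M \<Longrightarrow> v - norm (b - z) \<le> c"
    and c_le: "\<And>a u. (a, u) \<in> M \<Longrightarrow> c \<le> norm (a + z) - u"
  shows "w + t * c \<le> norm (a + t *\<^sub>R z)"
proof -
  have m: "((1/s) *\<^sub>R a, (1/s) * w) \<in> M" for s using norming_graphD(3)[OF good aw] .
  have rescale: "norm (a + t *\<^sub>R z) = \<bar>t\<bar> * norm ((1/t) *\<^sub>R a + z)" if "t \<noteq> 0"
  proof -
    have "a + t *\<^sub>R z = t *\<^sub>R ((1/t) *\<^sub>R a + z)" using that by (simp add: scaleR_add_right)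
    then show ?thesis by simp
  qed
  consider "t = 0" | "t > 0" | "t < 0" by linarith
  then show ?thesis
  proof cases
    case 1 then show ?thesis using norming_graphD(4)[OF good aw] by simp
  next
    case 2
    have "t * c \<le> t * (norm ((1/t) *\<^sub>R a + z) - (1/t) * w)"
      by (rule mult_left_mono[OF c_le[OF m[of t]]]) (use 2 in simp)
    then show ?thesis using 2 rescale by (simp add: right_diff_distrib)
  next
    case 3
    have "(-t) * ((1/(-t)) * w - norm ((1/(-t)) *\<^sub>R a - z)) \<le> (-t) * c"
      by (rule mult_left_mono[OF c_ge[OF m[of "-t"]]]) (use 3 in simp)
    moreover have "(1/(-t)) *\<^sub>R a - z = - ((1/t) *\<^sub>R a + z)" by simp
    then have "norm ((1/(-t)) *\<^sub>R a - z) = norm ((1/t) *\<^sub>R a + z)"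
      by (simp only: norm_minus_cancel)
    ultimately show ?thesis using 3 rescale by (simp add: right_diff_distrib)
  qed
qed

lemma norming_graph_extension:
  fixes y z :: "'a::real_normed_vector"
  assumes good: "norming_graph y M" and nz: "\<And>u. (z, u) \<notin> M"
    and c_ge: "\<And>b v. (b, v) \<in> M \<Longrightarrow> v - norm (b - z) \<le> c"
    and c_le: "\<And>a u. (a, u) \<in> M \<Longrightarrow> c \<le> norm (a + z) - u"
  defines "M' \<equiv> {(a + t *\<^sub>R z, u + t * c) | a u t. (a, u) \<in> M}"
  shows "norming_graph y M'"
proof -
  note D = norming_graphD[OF good]
  have inM': "(a + t *\<^sub>R z, u + t * c) \<in> M'" if "(a, u) \<in> M" for a u t
    unfolding M'_def using that by blast
  show ?thesis
    unfolding norming_graph_def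
  proof (intro conjI allI impI)
    fix p u v assume "(p, u) \<in> M'" "(p, v) \<in> M'"
    then obtain a1 u1 t1 a2 u2 t2 where
      e1: "p = a1 + t1 *\<^sub>R z" "u = u1 + t1 * c" "(a1, u1) \<in> M" and
      e2: "p = a2 + t2 *\<^sub>R z" "v = u2 + t2 * c" "(a2, u2) \<in> M"
      unfolding M'_def by blast
    have t: "t1 = t2"
    proof (rule ccontr)
      assume ne: "t1 \<noteq> t2"
      have "(a1 - a2, u1 - u2) \<in> M" using D(2)[OF e1(3) D(3)[OF e2(3), of "-1"]] by simp
      from D(3)[OF this, of "1 / (t2 - t1)"]
      have "((1 / (t2 - t1)) *\<^sub>R (a1 - a2), (1 / (t2 - t1)) * (u1 - u2)) \<in> M" .
      moreover have "a1 - a2 = (t2 - t1) *\<^sub>R z" using e1(1) e2(1) by (simp add: algebra_simps)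
      ultimately show False using ne nz by simp
    qed
    then show "u = v" using e1 e2 D(1) by auto
  next
    fix p u q v assume "(p, u) \<in> M'" "(q, v) \<in> M'"
    then obtain a1 u1 t1 a2 u2 t2 where
      e1: "p = a1 + t1 *\<^sub>R z" "u = u1 + t1 * c" "(a1, u1) \<in> M" and
      e2: "q = a2 + t2 *\<^sub>R z" "v = u2 + t2 * c" "(a2, u2) \<in> M"
      unfolding M'_def by blast
    have "(a1 + a2 + (t1 + t2) *\<^sub>R z, u1 + u2 + (t1 + t2) * c) \<in> M'"
      by (rule inM'[OF D(2)[OF e1(3) e2(3)]])
    then show "(p + q, u + v) \<in> M'" using e1 e2 by (simp add: algebra_simps)
  next
    fix p u r assume "(p, u) \<in> M'"
    then obtain a1 u1 t1 where e1: "p = a1 + t1 *\<^sub>R z" "u = u1 + t1 * c" "(a1, u1) \<in> M"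
      unfolding M'_def by blast
    have "(r *\<^sub>R a1 + (r * t1) *\<^sub>R z, r * u1 + (r * t1) * c) \<in> M'"
      by (rule inM'[OF D(3)[OF e1(3)]])
    then show "(r *\<^sub>R p, r * u) \<in> M'" using e1 by (simp add: algebra_simps)
  next
    fix p u assume "(p, u) \<in> M'"
    then show "u \<le> norm p"
      unfolding M'_def using norming_graph_extension_dominated[OF good _ c_ge c_le] by blast
  next
    show "(y, norm y) \<in> M'" using inM'[OF D(5), of 0] by simp
  qed
qed

lemma norming_graph_extend:
  fixes y z :: "'a::real_normed_vector"
  assumes good: "norming_graph y M" and nz: "\<And>u. (z, u) \<notin> M"
  obtains M' where "norming_graph y M'" "M \<subseteq> M'" "M' \<noteq> M"
proof -
  note D = norming_graphD[OF good]
  have M0: "(0, 0) \<in> M" by (rule norming_graph_zero[OF good])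
  define L where "L = {v - norm (b - z) | b v. (b, v) \<in> M}"
  have key: "v - norm (b - z) \<le> norm (a + z) - u" if "(a, u) \<in> M" "(b, v) \<in> M" for a u b v
  proof -
    have "u + v \<le> norm ((a + z) + (b - z))" using D(4)[OF D(2)[OF that]] by simp
    also have "\<dots> \<le> norm (a + z) + norm (b - z)" by (rule norm_triangle_ineq)
    finally show ?thesis by simp
  qed
  have Lne: "L \<noteq> {}" and Lbdd: "bdd_above L"
    using M0 key[OF M0] unfolding L_def bdd_above_def by blast+
  have c_ge: "v - norm (b - z) \<le> Sup L" if "(b, v) \<in> M" for b v
    by (rule cSup_upper[OF _ Lbdd]) (use that L_def in blast)
  have c_le: "Sup L \<le> norm (a + z) - u" if "(a, u) \<in> M" for a u
    by (rule cSup_least[OF Lne]) (use key[OF that] L_def in blast)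
  define M' where "M' = {(a + t *\<^sub>R z, u + t * Sup L) | a u t. (a, u) \<in> M}"
  have "M \<subseteq> M'" unfolding M'_def by force
  moreover have "(z, Sup L) \<in> M'" unfolding M'_def using M0 by force
  ultimately show ?thesis
    using that norming_graph_extension[OF good nz c_ge c_le] nz unfolding M'_def by blast
qed

theorem hahn_banach_norming:
  fixes y :: "'a::real_normed_vector"
  obtains \<phi> where "linear \<phi>" "\<And>a. \<bar>\<phi> a\<bar> \<le> norm a" "\<phi> y = norm y"
proof -
  define A where "A = {G. norming_graph y G}"
  have "\<forall>C\<in>chains A. \<exists>U\<in>A. \<forall>X\<in>C. X \<subseteq> U"
  proof
    fix C assume C: "C \<in> chains A"
    show "\<exists>U\<in>A. \<forall>X\<in>C. X \<subseteq> U"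
    proof (cases "C = {}")
      case True then show ?thesis using norming_graph_line A_def by blast
    next
      case False then show ?thesis using norming_graph_Union_chain C A_def by blast
    qed
  qed
  from Zorn_Lemma2[OF this] obtain M where M: "M \<in> A" "\<forall>X\<in>A. M \<subseteq> X \<longrightarrow> X = M" by blast
  have good: "norming_graph y M" using M A_def by blast
  note D = norming_graphD[OF good]
  have "\<exists>u. (z, u) \<in> M" for z
    using norming_graph_extend[OF good, of z] M A_def by (metis mem_Collect_eq)
  then obtain \<phi> where phi: "\<And>z. (z, \<phi> z) \<in> M" by metis
  have phi_eq: "\<phi> z = u" if "(z, u) \<in> M" for z u using D(1)[OF phi that] .
  have lin: "linear \<phi>"
    by (rule linearI) (use phi_eq D(2,3) phi in auto)
  have "\<bar>\<phi> a\<bar> \<le> norm a" for a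
    using D(4)[OF phi, of a] D(4)[OF phi, of "- a"] linear_neg[OF lin, of a] by simp
  then show ?thesis using that lin phi_eq[OF D(5)] by blast
qed

lemma complex_norming_functional:
  fixes y :: "'a::cstar_algebra"
  obtains \<psi> :: "'a \<Rightarrow> complex"
  where "bounded_linear \<psi>" "\<And>c a. \<psi> (scaleC c a) = c * \<psi> a" "\<And>a. cmod (\<psi> a) \<le> norm a"
    "Re (\<psi> y) = norm y"
proof -
  obtain \<phi> :: "'a \<Rightarrow> real" where lin: "linear \<phi>" and bnd: "\<And>a. \<bar>\<phi> a\<bar> \<le> norm a"
    and py: "\<phi> y = norm y"
    using hahn_banach_norming[of y] by blast
  have phiC: "\<phi> (scaleC c a) = Re c * \<phi> a + Im c * \<phi> (scaleC \<i> a)" for c a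
    unfolding scaleC_eq_Re_Im[of c a] by (simp add: linear_add[OF lin] linear_scale[OF lin])
  define \<psi> where "\<psi> a = Complex (\<phi> a) (- \<phi> (scaleC \<i> a))" for a
  have psiC: "\<psi> (scaleC c a) = c * \<psi> a" for c a
  proof -
    have "\<phi> (scaleC (\<i> * c) a) = - Im c * \<phi> a + Re c * \<phi> (scaleC \<i> a)"
      using phiC[of "\<i> * c" a] by simp
    then show ?thesis
      unfolding \<psi>_def scaleC_scaleC phiC[of c a] by (simp add: complex_eq_iff algebra_simps)
  qed
  have psin: "cmod (\<psi> a) \<le> norm a" for a
  proof (cases "\<psi> a = 0")
    case False
    define c where "c = cnj (\<psi> a) / cmod (\<psi> a)"
    have "c * \<psi> a = (cmod (\<psi> a))\<^sup>2 / cmod (\<psi> a)"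
      unfolding c_def using complex_norm_square[of "\<psi> a"] by (simp add: mult.commute)
    also have "\<dots> = cmod (\<psi> a)" using False by (simp add: power2_eq_square)
    finally have "cmod (\<psi> a) = Re (\<psi> (scaleC c a))" using psiC[of c a] by simp
    also have "\<dots> = \<phi> (scaleC c a)" by (simp add: \<psi>_def)
    also have "\<dots> \<le> norm (scaleC c a)" using bnd[of "scaleC c a"] by simp
    also have "\<dots> = norm a" using False by (simp add: norm_scaleC c_def norm_divide)
    finally show ?thesis .
  qed simp
  have "bounded_linear \<psi>"
  proof (rule bounded_linear_intro[where K=1])
    show "\<psi> (a + b) = \<psi> a + \<psi> b" for a b
      unfolding \<psi>_def by (simp add: scaleC_add_right linear_add[OF lin] complex_eq_iff)
    show "\<psi> (r *\<^sub>R a) = r *\<^sub>R \<psi> a" for r a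
      using psiC[of "complex_of_real r" a] by (simp add: scaleC_of_real scaleR_conv_of_real)
  qed (simp add: psin)
  then show ?thesis by (rule that[OF _ psiC psin]) (simp add: \<psi>_def py)
qed

section \<open>The norm of a self-adjoint element is its spectral radius\<close>

lemma cinvertible_one_minus_scaleC:
  fixes x :: "'a::cstar_algebra"
  assumes inv: "\<And>c. r < cmod c \<Longrightarrow> cinvertible (x - of_complex c)" and l: "cmod l * r < 1"
  shows "cinvertible (1 - scaleC l x)"
proof (cases "l = 0")
  case False
  then have "r < 1 / cmod l" using l by (simp add: field_simps)
  then have "r < cmod (inverse l)" by (simp add: norm_inverse divide_inverse)
  then have "cinvertible (scaleC (- l) (x - of_complex (inverse l)))"
    using False by (intro cinvertible_scaleC inv) auto
  moreover have "scaleC (- l) (x - of_complex (inverse l)) = 1 - scaleC l x"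
    using False by (simp add: scaleC_diff_right scaleC_scaleC scaleC_minus_left scaleC_one)
  ultimately show ?thesis by simp
qed simp

lemma isCont_cinv_one_minus_scaleC:
  fixes x :: "'a::cstar_algebra"
  assumes "cinvertible (1 - scaleC l x)"
  shows "isCont (\<lambda>l. cinv (1 - scaleC l x)) l"
proof -
  have "isCont (\<lambda>l. 1 - scaleC l x) l"
    by (intro continuous_intros bounded_linear.isCont[OF bounded_linear_scaleC_left])
  from isCont_o2[OF this isCont_cinv[OF assms]] show ?thesis by simp
qed

lemma holomorphic_on_functional_resolvent:
  fixes x :: "'a::cstar_algebra" and \<psi> :: "'a \<Rightarrow> complex"
  assumes bl: "bounded_linear \<psi>" and \<psi>: "\<And>c a. \<psi> (scaleC c a) = c * \<psi> a"
    and U: "open U" and inv: "\<And>l. l \<in> U \<Longrightarrow> cinvertible (1 - scaleC l x)"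
  shows "(\<lambda>l. \<psi> (cinv (1 - scaleC l x))) holomorphic_on U"
proof -
  define R where "R l = cinv (1 - scaleC l x)" for l
  have "((\<lambda>l. \<psi> (R l)) has_field_derivative \<psi> (R l0 * x * R l0)) (at l0)" if l0: "l0 \<in> U" for l0
  proof -
    have quot: "\<psi> (R l * x * R l0) = (\<psi> (R l) - \<psi> (R l0)) / (l - l0)"
      if "l \<in> U" "l \<noteq> l0" for l
    proof -
      have "R l - R l0 = R l * ((1 - scaleC l0 x) - (1 - scaleC l x)) * R l0"
        unfolding R_def by (rule resolvent_identity[OF inv[OF that(1)] inv[OF l0]])
      also have "(1 - scaleC l0 x) - (1 - scaleC l x) = scaleC (l - l0) x"
        by (simp add: scaleC_diff_left)
      also have "R l * scaleC (l - l0) x * R l0 = scaleC (l - l0) (R l * x * R l0)"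
        by (simp add: mult_scaleC_left mult_scaleC_right)
      finally have "\<psi> (R l) - \<psi> (R l0) = (l - l0) * \<psi> (R l * x * R l0)"
        using \<psi> linear_diff[OF bounded_linear.linear[OF bl], of "R l" "R l0"] by simp
      then show ?thesis using that(2) by simp
    qed
    have "(R \<longlongrightarrow> R l0) (at l0)"
      using isCont_cinv_one_minus_scaleC[OF inv[OF l0]] unfolding R_def isCont_def .
    then have "((\<lambda>l. \<psi> (R l * x * R l0)) \<longlongrightarrow> \<psi> (R l0 * x * R l0)) (at l0)"
      by (intro bounded_linear.tendsto[OF bl] tendsto_mult tendsto_const)
    then have "((\<lambda>l. (\<psi> (R l) - \<psi> (R l0)) / (l - l0)) \<longlongrightarrow> \<psi> (R l0 * x * R l0)) (at l0)"
      by (rule Lim_transform_within_open[OF _ U l0]) (rule quot)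
    then show ?thesis by (simp add: has_field_derivative_iff)
  qed
  then show ?thesis unfolding R_def by (auto simp: holomorphic_on_open[OF U])
qed

lemma functional_resolvent_has_fps_expansion:
  fixes x :: "'a::cstar_algebra" and \<psi> :: "'a \<Rightarrow> complex"
  assumes bl: "bounded_linear \<psi>" and \<psi>: "\<And>c a. \<psi> (scaleC c a) = c * \<psi> a"
  shows "(\<lambda>l. \<psi> (cinv (1 - scaleC l x))) has_fps_expansion Abs_fps (\<lambda>k. \<psi> (x ^ k))"
proof (rule has_fps_expansionI)
  have "(\<lambda>k. \<psi> (x ^ k) * u ^ k) sums \<psi> (cinv (1 - scaleC u x))"
    if u: "u \<in> ball 0 (1 / (norm x + 1))" for u
  proof -
    have pos: "norm x + 1 > 0" by (simp add: add_nonneg_pos)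
    have "cmod u < 1 / (norm x + 1)" using u by simp
    then have "cmod u * (norm x + 1) < 1" using pos_less_divide_eq[OF pos] by blast
    have "cmod u * norm x \<le> cmod u * (norm x + 1)" by (intro mult_left_mono) auto
    also have "\<dots> < 1" by fact
    finally have nu: "norm (scaleC u x) < 1" by (simp add: norm_scaleC)
    have "(\<lambda>k. scaleC u x ^ k) sums cinv (1 - scaleC u x)"
      using summable_sums[OF neumann_series(1)[OF nu]] neumann_series(3)[OF nu] by simp
    from bounded_linear.sums[OF bl this] show ?thesis
      by (simp add: scaleC_power \<psi> mult.commute)
  qed
  moreover have "0 \<in> ball (0::complex) (1 / (norm x + 1))"
    by (simp add: add_nonneg_pos)
  ultimately show "\<forall>\<^sub>F u in nhds 0. (\<lambda>k. fps_nth (Abs_fps (\<lambda>k. \<psi> (x ^ k))) k * u ^ k) sums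
      \<psi> (cinv (1 - scaleC u x))"
    unfolding eventually_nhds by (intro exI[of _ "ball 0 (1 / (norm x + 1))"]) auto
qed

text \<open>The Cauchy estimates for \<open>\<psi> \<circ> resolvent\<close> on the circle of radius \<open>s\<close> bound the Taylor
  coefficients \<open>\<psi> (x\<^sup>n)\<close>; a norming functional \<open>\<psi>\<close> for \<open>x\<^sup>n\<close> (Hahn--Banach) turns this into a bound
  for \<open>\<parallel>x\<^sup>n\<parallel>\<close>.\<close>

lemma norm_power_le_Cauchy:
  fixes x :: "'a::cstar_algebra"
  assumes U: "open U" "cball 0 s \<subseteq> U" and inv: "\<And>l. l \<in> U \<Longrightarrow> cinvertible (1 - scaleC l x)"
    and s: "s > 0" and M: "\<And>l. l \<in> sphere 0 s \<Longrightarrow> norm (cinv (1 - scaleC l x)) \<le> M"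
  shows "norm (x ^ n) \<le> M / s ^ n"
proof -
  obtain \<psi> :: "'a \<Rightarrow> complex" where bl: "bounded_linear \<psi>"
    and \<psi>: "\<And>c a. \<psi> (scaleC c a) = c * \<psi> a" and \<psi>_le: "\<And>a. cmod (\<psi> a) \<le> norm a"
    and \<psi>_x: "Re (\<psi> (x ^ n)) = norm (x ^ n)"
    using complex_norming_functional[of "x ^ n"] by blast
  define g where "g l = \<psi> (cinv (1 - scaleC l x))" for l
  have holo: "g holomorphic_on U"
    unfolding g_def by (rule holomorphic_on_functional_resolvent[OF bl \<psi> U(1) inv])
  have coeff: "\<psi> (x ^ n) = (deriv ^^ n) g 0 / fact n"
    using fps_nth_fps_expansion[OF functional_resolvent_has_fps_expansion[OF bl \<psi>, of x], of n]
    unfolding g_def by simp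
  have Cauchy: "norm ((deriv ^^ n) g 0) \<le> fact n * M / s ^ n"
  proof (rule Cauchy_inequality)
    show "g holomorphic_on ball 0 s"
      using holo U(2) ball_subset_cball by (blast intro: holomorphic_on_subset)
    show "continuous_on (cball 0 s) g"
      using holomorphic_on_imp_continuous_on[OF holo] U(2) by (rule continuous_on_subset)
    show "norm (g l) \<le> M" if "norm (0 - l) = s" for l
      using M[of l] \<psi>_le[of "cinv (1 - scaleC l x)"] that unfolding g_def by simp
  qed (use s in auto)
  have "cmod (\<psi> (x ^ n)) = norm ((deriv ^^ n) g 0) / fact n"
    unfolding coeff by (simp add: norm_divide)
  also have "\<dots> \<le> (fact n * M / s ^ n) / fact n"
    using Cauchy by (intro divide_right_mono) auto
  finally have "cmod (\<psi> (x ^ n)) \<le> M / s ^ n" by simp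
  then show ?thesis using complex_Re_le_cmod[of "\<psi> (x ^ n)"] \<psi>_x by linarith
qed

lemma norm_power_le_resolvent_bound:
  fixes x :: "'a::cstar_algebra"
  assumes inv: "\<And>c. r < cmod c \<Longrightarrow> cinvertible (x - of_complex c)"
    and r: "r \<ge> 0" and s: "s > 0" "s * r < 1"
  obtains M where "\<And>n. norm (x ^ n) \<le> M / s ^ n"
proof -
  define U where "U = {l::complex. cmod l * r < 1}"
  have U: "open U" unfolding U_def by (intro open_Collect_less continuous_intros)
  have invU: "cinvertible (1 - scaleC l x)" if "l \<in> U" for l
    using cinvertible_one_minus_scaleC[OF inv] that U_def by blast
  have cball: "cball 0 s \<subseteq> U"
  proof
    fix l :: complex assume "l \<in> cball 0 s"
    then have "cmod l * r \<le> s * r" using r by (intro mult_right_mono) auto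
    then show "l \<in> U" using s U_def by simp
  qed
  have "continuous_on (sphere 0 s) (\<lambda>l. cinv (1 - scaleC l x))"
  proof (intro continuous_at_imp_continuous_on ballI)
    fix l :: complex assume "l \<in> sphere 0 s"
    then have "l \<in> U" using cball sphere_cball by blast
    then show "isCont (\<lambda>l. cinv (1 - scaleC l x)) l" by (intro isCont_cinv_one_minus_scaleC invU)
  qed
  then have "bounded ((\<lambda>l. cinv (1 - scaleC l x)) ` sphere 0 s)"
    by (intro compact_imp_bounded compact_continuous_image) auto
  then obtain M where "\<And>l. l \<in> sphere 0 s \<Longrightarrow> norm (cinv (1 - scaleC l x)) \<le> M"
    unfolding bounded_iff by blast
  then show ?thesis using norm_power_le_Cauchy[OF U cball invU s(1)] that by blast
qed

text \<open>For self-adjoint \<open>h\<close> the norms of \<open>h\<^sup>2\<^sup>^\<^sup>m\<close> grow exactly like \<open>\<parallel>h\<parallel>\<^sup>2\<^sup>^\<^sup>m\<close>, which is incompatible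
  with the bound above for any \<open>1/s\<close> strictly between \<open>r\<close> and \<open>\<parallel>h\<parallel>\<close>.\<close>

theorem self_adjoint_norm_le:
  fixes h :: "'a::cstar_algebra"
  assumes sa: "adj h = h" and r: "r \<ge> 0"
    and inv: "\<And>c. r < cmod c \<Longrightarrow> cinvertible (h - of_complex c)"
  shows "norm h \<le> r"
proof (rule ccontr)
  assume "\<not> norm h \<le> r"
  define s where "s = 2 / (norm h + r)"
  have s: "s > 0" "s * r < 1" "s * norm h > 1"
    using \<open>\<not> norm h \<le> r\<close> r by (auto simp: s_def field_simps)
  obtain M where M: "\<And>n. norm (h ^ n) \<le> M / s ^ n"
    using norm_power_le_resolvent_bound[OF inv r s(1,2)] by blast
  have bound: "(s * norm h) ^ 2 ^ m \<le> M" for m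
  proof -
    have "norm h ^ 2 ^ m \<le> M / s ^ 2 ^ m"
      using M[of "2 ^ m"] norm_power2_self_adjoint[OF sa, of m] by simp
    then show ?thesis using s(1) by (simp add: power_mult_distrib pos_le_divide_eq mult.commute)
  qed
  obtain m where m: "M < (s * norm h) ^ m" using real_arch_pow[OF s(3)] by blast
  have "(s * norm h) ^ m \<le> (s * norm h) ^ 2 ^ m"
    using s(3) less_exp[of m] by (intro power_increasing) auto
  then show False using m bound[of m] by linarith
qed

section \<open>Positivity and norms\<close>

lemma cpositive_norm_diff_le:
  fixes a :: "'a::cstar_algebra"
  assumes pos: "cpositive a" and t: "norm a \<le> t"
  shows "norm (of_real t - a) \<le> t"
proof (rule self_adjoint_norm_le)
  show "adj (of_real t - a) = of_real t - a" by (simp add: adj_diff cpositive_self_adjoint[OF pos])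
  show "0 \<le> t" using t norm_ge_zero[of a] by linarith
  fix c :: complex assume tc: "t < cmod c"
  have "complex_of_real t - c \<notin> cspectrum a"
  proof
    assume sp: "complex_of_real t - c \<in> cspectrum a"
    then obtain u where u: "complex_of_real t - c = complex_of_real u" "u \<ge> 0"
      using pos unfolding cpositive_def by auto
    then have "u \<le> t" using cspectrum_norm_le[OF sp] t by simp
    moreover have "c = complex_of_real (t - u)" using u(1) by (simp add: algebra_simps)
    then have "cmod c = \<bar>t - u\<bar>" by (simp del: of_real_diff)
    ultimately show False using tc u(2) by simp
  qed
  then have "cinvertible (- (a - of_complex (complex_of_real t - c)))"
    by (intro cinvertible_uminus) (simp add: not_in_cspectrum_iff)
  then show "cinvertible (of_real t - a - of_complex c)"
    by (simp add: of_complex_diff of_complex_of_real algebra_simps)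
qed

lemma cpositive_if_norm_diff_le:
  fixes a :: "'a::cstar_algebra"
  assumes sa: "adj a = a" and n: "norm (of_real t - a) \<le> t"
  shows "cpositive a"
proof (rule cpositiveI[OF sa])
  fix c :: complex assume c: "c \<notin> complex_of_real ` {0..}"
  show "cinvertible (a - of_complex c)"
  proof (cases "Im c = 0")
    case False
    then show ?thesis
      using self_adjoint_cspectrum_real[OF sa] by (auto simp flip: not_in_cspectrum_iff)
  next
    case True
    then have ceq: "c = complex_of_real (Re c)" by (simp add: complex_eq_iff)
    with c have neg: "Re c < 0" by (metis atLeast_iff image_eqI not_le)
    define k where "k = t - Re c"
    have k: "k > 0" "k > t" using n norm_ge_zero[of "of_real t - a"] neg unfolding k_def by linarith+
    define y where "y = (1 / k) *\<^sub>R (of_real t - a)"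
    have "norm y < 1" using n k unfolding y_def by (simp add: divide_simps)
    then have "cinvertible (scaleC (complex_of_real k) (1 - y))"
      using k by (intro cinvertible_scaleC neumann_series(2)) auto
    moreover have "a - of_complex c = scaleC (complex_of_real k) (1 - y)"
    proof -
      have "a - of_complex c = a - of_real (Re c)" by (subst ceq) (simp add: of_complex_of_real)
      also have "\<dots> = k *\<^sub>R 1 - (of_real t - a)"
        unfolding k_def by (simp add: of_real_def scaleR_diff_left)
      also have "\<dots> = k *\<^sub>R (1 - y)" unfolding y_def using k by (simp add: scaleR_diff_right)
      finally show ?thesis by (simp add: scaleC_of_real)
    qed
    ultimately show ?thesis by simp
  qed
qed

text \<open>The spectrum of \<open>a\<close> is then \<open>{0}\<close>, and the norm of \<open>a\<close> is its spectral radius.\<close>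

lemma cpositive_uminus_imp_zero:
  fixes a :: "'a::cstar_algebra"
  assumes pa: "cpositive a" and na: "cpositive (- a)"
  shows "a = 0"
proof -
  have "norm a \<le> 0"
  proof (rule self_adjoint_norm_le[OF cpositive_self_adjoint[OF pa] order_refl])
    fix c :: complex assume "0 < cmod c"
    show "cinvertible (a - of_complex c)"
    proof (cases "c \<in> complex_of_real ` {0..}")
      case True
      with \<open>0 < cmod c\<close> have "- c \<notin> complex_of_real ` {0..}"
        by (auto simp: complex_eq_iff)
      then have "cinvertible (- (- a - of_complex (- c)))"
        by (intro cinvertible_uminus cpositive_cinvertible[OF na])
      then show ?thesis by (simp add: scaleC_minus_left)
    qed (rule cpositive_cinvertible[OF pa])
  qed
  then show ?thesis by simp
qed

lemma self_adjoint_sum_squares_zero: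
  fixes w v :: "'a::cstar_algebra"
  assumes "adj w = w" "adj v = v" "w * w + v * v = 0"
  shows "w = 0"
proof -
  have "w * w = - (v * v)" using assms(3) by (simp add: eq_neg_iff_add_eq_0)
  then have "w * w = 0"
    using cpositive_square[OF assms(1)] cpositive_square[OF assms(2)]
    by (intro cpositive_uminus_imp_zero) simp_all
  then show ?thesis using self_adjoint_zero_iff_square_zero[OF assms(1)] by simp
qed

section \<open>Positive square roots\<close>

text \<open>The Taylor coefficients of \<open>f(x) = 1 - sqrt (1 - x)\<close>, determined recursively by
  \<open>f\<^sup>2 = 2 f - x\<close>.\<close>

function sqrt_coeff :: "nat \<Rightarrow> real" where
  "sqrt_coeff n = (if n = 0 then 0 else if n = 1 then 1/2
     else (1/2) * (\<Sum>i\<in>{1..<n}. sqrt_coeff i * sqrt_coeff (n - i)))"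
  by auto
termination by (relation "Wellfounded.measure id") auto

declare sqrt_coeff.simps [simp del]

lemma sqrt_coeff_0 [simp]: "sqrt_coeff 0 = 0"
  and sqrt_coeff_1 [simp]: "sqrt_coeff (Suc 0) = 1/2"
  by (simp_all add: sqrt_coeff.simps)

lemma sqrt_coeff_nonneg: "sqrt_coeff n \<ge> 0"
proof (induction n rule: less_induct)
  case (less n)
  have "(\<Sum>i\<in>{1..<n}. sqrt_coeff i * sqrt_coeff (n - i)) \<ge> 0"
    by (intro sum_nonneg mult_nonneg_nonneg less) auto
  then show ?case by (simp add: sqrt_coeff.simps[of n])
qed

lemma sqrt_coeff_convolution:
  "(\<Sum>i\<le>n. sqrt_coeff i * sqrt_coeff (n - i)) = 2 * sqrt_coeff n - (if n = 1 then 1 else 0)"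
proof (cases "n = 0")
  case False
  have "(\<Sum>i\<le>n. sqrt_coeff i * sqrt_coeff (n - i))
      = (\<Sum>i<n. sqrt_coeff i * sqrt_coeff (n - i))"
    by (simp add: lessThan_Suc_atMost[symmetric])
  also have "\<dots> = (\<Sum>i\<in>{1..<n}. sqrt_coeff i * sqrt_coeff (n - i))"
    using False by (simp add: lessThan_atLeast0 sum.atLeast_Suc_lessThan)
  finally show ?thesis
    using False by (cases "n = 1") (simp_all add: sqrt_coeff.simps[of n])
qed simp

lemma sqrt_coeff_convolution_sum_le:
  "(\<Sum>k\<le>N. \<Sum>i\<le>k. sqrt_coeff i * sqrt_coeff (k - i))
     \<le> (\<Sum>i\<le>N. sqrt_coeff i) * (\<Sum>j<N. sqrt_coeff j)"
proof -
  define f where "f = (\<lambda>(i, j). sqrt_coeff i * sqrt_coeff j)"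
  define T where "T = {(i, j). i + j \<le> N}"
  have f0: "f p \<ge> 0" for p unfolding f_def by (cases p) (simp add: sqrt_coeff_nonneg)
  have finT: "finite T" by (rule finite_subset[of _ "{..N} \<times> {..N}"]) (auto simp: T_def)
  have "(\<Sum>k\<le>N. \<Sum>i\<le>k. sqrt_coeff i * sqrt_coeff (k - i)) = sum f T"
    unfolding f_def T_def by (rule sum.triangle_reindex_eq[symmetric])
  also have "\<dots> = sum f (T \<inter> {..N} \<times> {..<N})"
  proof (rule sum.mono_neutral_right[OF finT])
    show "\<forall>p\<in>T - T \<inter> {..N} \<times> {..<N}. f p = 0"
    proof
      fix p assume "p \<in> T - T \<inter> {..N} \<times> {..<N}"
      then obtain i j where "p = (i, j)" "i + j \<le> N" "\<not> (i \<le> N \<and> j < N)"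
        unfolding T_def by auto
      then show "f p = 0" unfolding f_def by (cases "i = 0") auto
    qed
  qed auto
  also have "\<dots> \<le> sum f ({..N} \<times> {..<N})"
    by (rule sum_mono2) (auto simp: f0)
  also have "\<dots> = (\<Sum>i\<le>N. sqrt_coeff i) * (\<Sum>j<N. sqrt_coeff j)"
    unfolding f_def by (simp add: sum_product sum.cartesian_product)
  finally show ?thesis .
qed

text \<open>With \<open>S\<^sub>N\<close> the \<open>N\<close>-th partial sum, the convolution identity gives
  \<open>2 S\<^sub>N\<^sub>+\<^sub>1 - 1 \<le> S\<^sub>N\<^sub>+\<^sub>1 S\<^sub>N \<le> S\<^sub>N\<^sub>+\<^sub>1\<close> once \<open>S\<^sub>N \<le> 1\<close>.\<close>

lemma sqrt_coeff_partial_sum_le: "(\<Sum>i<N. sqrt_coeff i) \<le> 1"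
proof (induction N)
  case (Suc N)
  define B where "B = (\<Sum>i<Suc N. sqrt_coeff i)"
  have B: "B \<ge> 0" unfolding B_def by (rule sum_nonneg) (rule sqrt_coeff_nonneg)
  have "(\<Sum>k\<le>N. \<Sum>i\<le>k. sqrt_coeff i * sqrt_coeff (k - i)) = 2 * B - (if 1 \<le> N then 1 else 0)"
    unfolding B_def
    by (simp add: sqrt_coeff_convolution sum_subtractf sum_distrib_left[symmetric] lessThan_Suc_atMost)
  then have "2 * B - (if 1 \<le> N then 1 else 0) \<le> B * (\<Sum>j<N. sqrt_coeff j)"
    using sqrt_coeff_convolution_sum_le[of N] by (simp add: B_def lessThan_Suc_atMost)
  also have "\<dots> \<le> B" using Suc B by (simp add: mult_left_le)
  finally show ?case by (cases "N = 0") (simp_all add: B_def)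
qed simp

lemma summable_sqrt_coeff: "summable sqrt_coeff"
  by (rule summableI_nonneg_bounded[OF sqrt_coeff_nonneg sqrt_coeff_partial_sum_le])

lemma summable_norm_sqrt_series:
  fixes b :: "'a::cstar_algebra"
  assumes "norm b \<le> 1"
  shows "summable (\<lambda>n. norm (sqrt_coeff n *\<^sub>R b ^ n))"
    and "(\<Sum>n. norm (sqrt_coeff n *\<^sub>R b ^ n)) \<le> 1"
proof -
  have le: "norm (sqrt_coeff n *\<^sub>R b ^ n) \<le> sqrt_coeff n" for n
  proof -
    have "norm (b ^ n) \<le> 1"
      using norm_power_ineq[of b n] power_le_one[OF norm_ge_zero assms, of n] by linarith
    then show ?thesis using sqrt_coeff_nonneg[of n] by (simp add: mult_left_le)
  qed
  show s: "summable (\<lambda>n. norm (sqrt_coeff n *\<^sub>R b ^ n))"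
    by (rule summable_comparison_test'[OF summable_sqrt_coeff]) (use le in simp)
  have "(\<Sum>n. norm (sqrt_coeff n *\<^sub>R b ^ n)) \<le> (\<Sum>n. sqrt_coeff n)"
    by (rule suminf_le[OF le s summable_sqrt_coeff])
  also have "\<dots> \<le> 1"
    by (rule suminf_le_const[OF summable_sqrt_coeff sqrt_coeff_partial_sum_le])
  finally show "(\<Sum>n. norm (sqrt_coeff n *\<^sub>R b ^ n)) \<le> 1" .
qed

definition sqrt_one_minus :: "'a::cstar_algebra \<Rightarrow> 'a" where
  "sqrt_one_minus b = 1 - (\<Sum>n. sqrt_coeff n *\<^sub>R b ^ n)"

context
  fixes b :: "'a::cstar_algebra"
  assumes nb: "norm b \<le> 1"
begin

lemma summable_sqrt_series: "summable (\<lambda>n. sqrt_coeff n *\<^sub>R b ^ n)"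
  by (rule summable_norm_cancel[OF summable_norm_sqrt_series(1)[OF nb]])

lemma norm_one_minus_sqrt_one_minus: "norm (1 - sqrt_one_minus b) \<le> 1"
  using summable_norm[OF summable_norm_sqrt_series(1)[OF nb]] summable_norm_sqrt_series(2)[OF nb]
  unfolding sqrt_one_minus_def by simp

lemma sqrt_one_minus_square: "sqrt_one_minus b * sqrt_one_minus b = 1 - b"
proof -
  define F where "F = (\<Sum>n. sqrt_coeff n *\<^sub>R b ^ n)"
  have "F * F = (\<Sum>k. \<Sum>i\<le>k. (sqrt_coeff i *\<^sub>R b ^ i) * (sqrt_coeff (k - i) *\<^sub>R b ^ (k - i)))"
    unfolding F_def
    by (rule Cauchy_product[OF summable_norm_sqrt_series(1)[OF nb] summable_norm_sqrt_series(1)[OF nb]])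
  also have "\<dots> = (\<Sum>k. 2 *\<^sub>R (sqrt_coeff k *\<^sub>R b ^ k) - (if k = 1 then b else 0))"
  proof (rule suminf_cong)
    fix k
    have "(\<Sum>i\<le>k. (sqrt_coeff i *\<^sub>R b ^ i) * (sqrt_coeff (k - i) *\<^sub>R b ^ (k - i)))
        = (\<Sum>i\<le>k. sqrt_coeff i * sqrt_coeff (k - i)) *\<^sub>R b ^ k"
      by (simp add: scaleR_sum_left power_add[symmetric] mult.commute)
    then show "(\<Sum>i\<le>k. (sqrt_coeff i *\<^sub>R b ^ i) * (sqrt_coeff (k - i) *\<^sub>R b ^ (k - i)))
        = 2 *\<^sub>R (sqrt_coeff k *\<^sub>R b ^ k) - (if k = 1 then b else 0)"
      by (simp add: sqrt_coeff_convolution scaleR_diff_left)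
  qed
  also have "\<dots> = 2 *\<^sub>R F - b"
    using sums_unique[OF sums_diff[OF sums_scaleR_right[OF summable_sums[OF summable_sqrt_series]]
          sums_single[of 1 "\<lambda>_. b"]]]
    unfolding F_def by simp
  finally show ?thesis unfolding sqrt_one_minus_def F_def[symmetric] by (simp add: algebra_simps scaleR_2)
qed

lemma adj_sqrt_one_minus: "adj b = b \<Longrightarrow> adj (sqrt_one_minus b) = sqrt_one_minus b"
  unfolding sqrt_one_minus_def
  by (simp add: adj_diff bounded_linear.suminf[OF bounded_linear_adj summable_sqrt_series]
      adj_scaleR adj_power)

lemma sqrt_one_minus_commute:
  assumes "y * b = b * y"
  shows "y * sqrt_one_minus b = sqrt_one_minus b * y"
proof -
  have "y * b ^ n = b ^ n * y" for n
    using power_commuting_commutes[OF assms[symmetric], of n] by simp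
  then show ?thesis
    unfolding sqrt_one_minus_def
    by (simp add: right_diff_distrib left_diff_distrib suminf_mult[OF summable_sqrt_series, symmetric]
        suminf_mult2[OF summable_sqrt_series])
qed

lemma cpositive_sqrt_one_minus: "adj b = b \<Longrightarrow> cpositive (sqrt_one_minus b)"
  using norm_one_minus_sqrt_one_minus
  by (intro cpositive_if_norm_diff_le[where t = 1]) (simp_all add: adj_sqrt_one_minus)

end

lemma cpositive_sqrt_exists:
  fixes c :: "'a::cstar_algebra"
  assumes pos: "cpositive c"
  obtains r where "cpositive r" "r * r = c" "\<And>y. y * c = c * y \<Longrightarrow> y * r = r * y"
proof (cases "c = 0")
  case True
  then show ?thesis using that[of 0] cpositive_zero by simp
next
  case False
  define t where "t = norm c"
  have t: "t > 0" using False t_def by simp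
  define b where "b = 1 - (1 / t) *\<^sub>R c"
  have sab: "adj b = b" unfolding b_def by (simp add: adj_diff adj_scaleR cpositive_self_adjoint[OF pos])
  have "b = (1 / t) *\<^sub>R (of_real t - c)"
    unfolding b_def using t by (simp add: of_real_def scaleR_diff_right)
  then have "norm b = (1 / t) * norm (of_real t - c)" using t by simp
  also have "\<dots> \<le> 1" using cpositive_norm_diff_le[OF pos] t t_def by (simp add: divide_simps)
  finally have nb: "norm b \<le> 1" .
  show ?thesis
  proof (rule that[of "sqrt t *\<^sub>R sqrt_one_minus b"])
    show "cpositive (sqrt t *\<^sub>R sqrt_one_minus b)"
      using t by (intro cpositive_scaleR cpositive_sqrt_one_minus[OF nb sab]) simp
    show "sqrt t *\<^sub>R sqrt_one_minus b * (sqrt t *\<^sub>R sqrt_one_minus b) = c"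
    proof -
      have "sqrt t *\<^sub>R sqrt_one_minus b * (sqrt t *\<^sub>R sqrt_one_minus b) = t *\<^sub>R (1 - b)"
        using t by (simp add: sqrt_one_minus_square[OF nb])
      also have "\<dots> = c" using t by (simp add: b_def)
      finally show ?thesis .
    qed
    show "y * (sqrt t *\<^sub>R sqrt_one_minus b) = sqrt t *\<^sub>R sqrt_one_minus b * y"
      if "y * c = c * y" for y
      using that sqrt_one_minus_commute[OF nb, of y] by (simp add: b_def algebra_simps)
  qed
qed

text \<open>With \<open>e = q - r\<close> and the positive roots of \<open>q\<close> and \<open>r\<close>, the self-adjoint elements
  \<open>w = sqrt q \<cdot> e\<close> and \<open>v = sqrt r \<cdot> e\<close> satisfy \<open>w\<^sup>2 + v\<^sup>2 = (q + r)(q - r) e = 0\<close>; hence \<open>w = v = 0\<close>,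
  so \<open>q e = r e = 0\<close> and \<open>e\<^sup>2 = 0\<close>.\<close>

lemma cpositive_commuting_sqrt_eq:
  fixes q r :: "'a::cstar_algebra"
  assumes pq: "cpositive q" and pr: "cpositive r" and qr: "q * r = r * q" and rr: "r * r = q * q"
  shows "q = r"
proof -
  obtain sq where psq: "cpositive sq" and sqsq: "sq * sq = q"
    and sqc: "\<And>y. y * q = q * y \<Longrightarrow> y * sq = sq * y"
    by (rule cpositive_sqrt_exists[OF pq]) (rule that)
  obtain sr where psr: "cpositive sr" and srsr: "sr * sr = r"
    and src: "\<And>y. y * r = r * y \<Longrightarrow> y * sr = sr * y"
    by (rule cpositive_sqrt_exists[OF pr]) (rule that)
  define e where "e = q - r"
  have sae: "adj e = e"
    unfolding e_def by (simp add: adj_diff cpositive_self_adjoint[OF pq] cpositive_self_adjoint[OF pr])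
  have "r * sq = sq * r" "q * sq = sq * q" using sqc qr by simp_all
  then have sq_e: "sq * e = e * sq" unfolding e_def by (simp add: algebra_simps)
  have "q * sr = sr * q" "r * sr = sr * r" using src qr by simp_all
  then have sr_e: "sr * e = e * sr" unfolding e_def by (simp add: algebra_simps)
  define w where "w = sq * e"
  define v where "v = sr * e"
  have saw: "adj w = w" and sav: "adj v = v"
    unfolding w_def v_def using sq_e sr_e sae
    by (simp_all add: adj_mult cpositive_self_adjoint[OF psq] cpositive_self_adjoint[OF psr])
  have square: "s * e * (s * e) = (s * s) * (e * e)" if "s * e = e * s" for s :: 'a
  proof -
    have "s * e * (s * e) = s * (e * s) * e" by (simp only: mult.assoc)
    then show ?thesis by (simp only: that[symmetric] mult.assoc)
  qed
  have "w * w + v * v = (q + r) * e * e"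
    unfolding w_def v_def square[OF sq_e] square[OF sr_e] sqsq srsr
    by (simp add: distrib_right mult.assoc)
  also have "(q + r) * e = 0" unfolding e_def using rr qr by (simp add: algebra_simps)
  finally have "w * w + v * v = 0" by simp
  then have "w = 0" "v = 0"
    using self_adjoint_sum_squares_zero[OF saw sav] self_adjoint_sum_squares_zero[OF sav saw]
    by (simp_all add: add.commute)
  moreover have "q * e = sq * w" "r * e = sr * v"
    unfolding w_def v_def sqsq[symmetric] srsr[symmetric] by (simp_all only: mult.assoc)
  ultimately have "q * e = 0" "r * e = 0" by simp_all
  then have "e * e = 0" by (simp add: e_def left_diff_distrib)
  then show ?thesis using self_adjoint_zero_iff_square_zero[OF sae] e_def by simp
qed

text \<open>Both roots commute with the root of \<open>q\<^sup>2\<close> constructed above.\<close>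

lemma cpositive_sqrt_unique:
  fixes p q :: "'a::cstar_algebra"
  assumes p: "cpositive p" and q: "cpositive q" and pq: "p * p = q * q"
  shows "p = q"
proof -
  obtain r where r: "cpositive r" "r * r = q * q"
    "\<And>y. y * (q * q) = q * q * y \<Longrightarrow> y * r = r * y"
    by (rule cpositive_sqrt_exists[OF cpositive_square[OF cpositive_self_adjoint[OF q]]]) (rule that)
  have "p * r = r * p" by (rule r(3)) (simp add: mult.assoc flip: pq)
  with r(2) pq have "p = r" by (intro cpositive_commuting_sqrt_eq[OF p r(1)]) simp_all
  moreover have "q * r = r * q" by (rule r(3)) (simp add: mult.assoc)
  with r(2) have "q = r" by (intro cpositive_commuting_sqrt_eq[OF q r(1)]) simp_all
  ultimately show ?thesis by simp
qed

lemma cabs_eqI: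
  fixes t p :: "'a::cstar_algebra"
  assumes "cpositive p" "p * p = adj t * t"
  shows "cabs t = p"
  unfolding cabs_def
proof (rule the_equality)
  show "cpositive p \<and> p * p = adj t * t" using assms by simp
  show "p' = p" if "cpositive p' \<and> p' * p' = adj t * t" for p'
    using that assms by (intro cpositive_sqrt_unique[of p' p]) simp_all
qed

lemma cabs_self_adjoint:
  fixes s :: "'a::cstar_algebra"
  assumes "adj s = s"
  shows "cpositive (cabs s)" "cabs s * cabs s = s * s"
    "\<And>y. y * (s * s) = (s * s) * y \<Longrightarrow> y * cabs s = cabs s * y"
proof -
  obtain r where r: "cpositive r" "r * r = s * s" "\<And>y. y * (s * s) = (s * s) * y \<Longrightarrow> y * r = r * y"
    by (rule cpositive_sqrt_exists[OF cpositive_square[OF assms]]) (rule that)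
  have eq: "cabs s = r" by (rule cabs_eqI[OF r(1)]) (simp add: r(2) assms)
  show "cpositive (cabs s)" "cabs s * cabs s = s * s" using r(1,2) eq by simp_all
  show "y * cabs s = cabs s * y" if "y * (s * s) = (s * s) * y" for y
    unfolding eq by (rule r(3)[OF that])
qed

section \<open>Idempotents\<close>

lemma cinvertible_idempotent_combination:
  fixes a b P :: "'a::cstar_algebra"
  assumes P: "P * P = P" and a: "cinvertible a" "a * P = P * a" and b: "cinvertible b" "b * P = P * b"
  shows "cinvertible (a * P + b * (1 - P))"
proof (rule cinvertibleI)
  have comm: "(1 - P) * y = y * (1 - P)" if "P * y = y * P" for y
    using that by (simp add: algebra_simps)
  have swap: "x * E * (y * F) = (x * y) * (E * F)" if "E * y = y * E" for x y E F :: 'a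
  proof -
    have "x * E * (y * F) = x * (E * y) * F" by (simp only: mult.assoc)
    then show ?thesis by (simp only: that mult.assoc)
  qed
  have P1: "P * (1 - P) = 0" "(1 - P) * P = 0" "(1 - P) * (1 - P) = 1 - P"
    using P by (simp_all add: algebra_simps)
  have ca: "P * cinv a = cinv a * P" and cb: "P * cinv b = cinv b * P"
    using cinv_intertwine[OF a] cinv_intertwine[OF b] by simp_all
  have "(a * P + b * (1 - P)) * (cinv a * P + cinv b * (1 - P))
      = a * cinv a * (P * P) + b * cinv a * ((1 - P) * P)
        + (a * cinv b * (P * (1 - P)) + b * cinv b * ((1 - P) * (1 - P)))"
    by (simp only: distrib_left distrib_right swap[OF ca] swap[OF cb]
        swap[OF comm[OF ca]] swap[OF comm[OF cb]])
  then show "(a * P + b * (1 - P)) * (cinv a * P + cinv b * (1 - P)) = 1"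
    using P P1 a(1) b(1) by simp
  have "(cinv a * P + cinv b * (1 - P)) * (a * P + b * (1 - P))
      = cinv a * a * (P * P) + cinv b * a * ((1 - P) * P)
        + (cinv a * b * (P * (1 - P)) + cinv b * b * ((1 - P) * (1 - P)))"
    by (simp only: distrib_left distrib_right swap[OF a(2)[symmetric]] swap[OF b(2)[symmetric]]
        swap[OF comm[OF a(2)[symmetric]]] swap[OF comm[OF b(2)[symmetric]]])
  then show "(cinv a * P + cinv b * (1 - P)) * (a * P + b * (1 - P)) = 1"
    using P P1 a(1) b(1) by simp
qed

lemma cpositive_mult_projection:
  fixes T P :: "'a::cstar_algebra"
  assumes pT: "cpositive T" and saP: "adj P = P" and PP: "P * P = P" and TP: "T * P = P * T"
  shows "cpositive (T * P)"
proof (rule cpositiveI)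
  show "adj (T * P) = T * P" using TP by (simp add: adj_mult saP cpositive_self_adjoint[OF pT])
  fix c :: complex assume c: "c \<notin> complex_of_real ` {0..}"
  then have "c \<noteq> 0" by force
  have "cinvertible ((T - of_complex c) * P + of_complex (- c) * (1 - P))"
  proof (rule cinvertible_idempotent_combination[OF PP])
    show "cinvertible (T - of_complex c)" by (rule cpositive_cinvertible[OF pT c])
    show "cinvertible (of_complex (- c) :: 'a)"
      using \<open>c \<noteq> 0\<close> by (intro cinvertible_scaleC) simp_all
    show "(T - of_complex c) * P = P * (T - of_complex c)"
      using TP of_complex_commute[of c P] by (simp add: algebra_simps)
    show "of_complex (- c) * P = P * of_complex (- c)" by (rule of_complex_commute)
  qed
  then show "cinvertible (T * P - of_complex c)"
    by (simp add: algebra_simps scaleC_minus_left of_complex_commute[of c P])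
qed

lemma cabs_eq_mult_projection:
  fixes T P t :: "'a::cstar_algebra"
  assumes "cpositive T" "adj P = P" "P * P = P" "T * P = P * T" "T * T * P = adj t * t"
  shows "cabs t = T * P"
proof (rule cabs_eqI)
  show "cpositive (T * P)" using assms by (intro cpositive_mult_projection)
  have "T * P * (T * P) = T * T * (P * P)" using assms(4) by (metis mult.assoc)
  then show "T * P * (T * P) = adj t * t" using assms(3,5) by simp
qed

text \<open>For an idempotent \<open>Q\<close> the orthogonal projection onto its range is \<open>Q (Q + Q\<^sup>* - 1)\<^sup>-\<^sup>1\<close>.\<close>

definition range_projection :: "'a::cstar_algebra \<Rightarrow> 'a" where
  "range_projection Q = Q * cinv (Q + adj Q - 1)"

lemma idempotent_adj: "Q * Q = Q \<Longrightarrow> adj Q * adj (Q::'a::cstar_algebra) = adj Q"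
  by (metis adj_mult)

lemma idempotent_adj_square:
  fixes Q :: "'a::cstar_algebra"
  assumes "Q * Q = Q"
  shows "(Q + adj Q - 1) * (Q + adj Q - 1) = 1 - Q - adj Q + Q * adj Q + adj Q * Q"
proof -
  note FF = idempotent_adj[OF assms]
  have "Q * (Q * z) = Q * z" "adj Q * (adj Q * z) = adj Q * z" for z
    using assms FF by (simp_all flip: mult.assoc)
  then show ?thesis using assms FF by (simp add: algebra_simps)
qed

text \<open>The square of \<open>Q + Q\<^sup>* - 1\<close> is \<open>1 + K\<^sup>2\<close> for the self-adjoint \<open>K = \<i>(Q - Q\<^sup>*)\<close>.\<close>

lemma cinvertible_idempotent_adj:
  fixes Q :: "'a::cstar_algebra"
  assumes idem: "Q * Q = Q"
  shows "cinvertible (Q + adj Q - 1)"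
proof (rule cinvertible_square_imp_cinvertible)
  define K where "K = scaleC \<i> (Q - adj Q)"
  have "adj K = K"
    unfolding K_def by (simp add: adj_scaleC adj_diff adj_adj scaleC_minus_left scaleC_diff_right)
  moreover have "- 1 \<notin> complex_of_real ` {0..}" by (auto simp: complex_eq_iff)
  ultimately have "cinvertible (K * K - of_complex (- 1))"
    by (intro cpositive_cinvertible cpositive_square)
  moreover have "K * K = - ((Q - adj Q) * (Q - adj Q))"
    unfolding K_def
    by (simp add: mult_scaleC_left mult_scaleC_right scaleC_scaleC scaleC_minus_left scaleC_one)
  moreover have "(Q - adj Q) * (Q - adj Q) = Q + adj Q - Q * adj Q - adj Q * Q"
    using idem idempotent_adj[OF idem] by (simp add: algebra_simps)
  ultimately have "cinvertible (1 - Q - adj Q + Q * adj Q + adj Q * Q)"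
    by (simp add: scaleC_minus_left scaleC_one algebra_simps)
  then show "cinvertible ((Q + adj Q - 1) * (Q + adj Q - 1))"
    by (simp only: idempotent_adj_square[OF idem])
qed

lemma range_projection:
  fixes Q :: "'a::cstar_algebra"
  assumes idem: "Q * Q = Q"
  defines "S \<equiv> Q + adj Q - 1"
  shows "adj (range_projection Q) = range_projection Q"
    and "range_projection Q * range_projection Q = range_projection Q"
    and "S * S * range_projection Q = Q * adj Q"
    and "range_projection Q * (S * S) = Q * adj Q"
proof -
  note FF = idempotent_adj[OF idem]
  have S: "adj S = S" "cinvertible S"
    unfolding S_def using cinvertible_idempotent_adj[OF idem] by (simp_all add: adj_add adj_diff adj_adj)
  have QS: "Q * S = Q * adj Q" "S * adj Q = Q * adj Q"
    unfolding S_def by (simp_all add: algebra_simps idem FF)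
  have SQ: "S * Q = adj Q * Q" "adj Q * S = adj Q * Q"
    unfolding S_def by (simp_all add: algebra_simps idem FF)
  have Q_cinv: "cinv S * adj Q = Q * cinv S"
    using SQ by (intro cinv_intertwine[OF S(2)]) simp
  have F_cinv: "cinv S * Q = adj Q * cinv S"
    using QS by (intro cinv_intertwine[OF S(2)]) simp
  have P: "range_projection Q = Q * cinv S" unfolding range_projection_def S_def ..
  show "adj (range_projection Q) = range_projection Q"
    unfolding P using S by (simp add: adj_mult adj_cinv Q_cinv)
  have "Q * cinv S * (Q * cinv S) = Q * (cinv S * Q) * cinv S" by (simp only: mult.assoc)
  also have "\<dots> = Q * S * cinv S * cinv S" unfolding F_cinv QS(1) by (simp only: mult.assoc)
  also have "\<dots> = Q * cinv S" using S(2) by (simp add: mult.assoc)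
  finally show "range_projection Q * range_projection Q = range_projection Q" unfolding P .
  have "S * S * (Q * cinv S) = S * (S * Q) * cinv S" by (simp only: mult.assoc)
  also have "\<dots> = S * adj Q * (S * cinv S)" unfolding SQ(1) SQ(2)[symmetric] by (simp only: mult.assoc)
  finally show "S * S * range_projection Q = Q * adj Q" unfolding P QS(2) using S(2) by simp
  have "Q * cinv S * (S * S) = Q * (cinv S * S) * S" by (simp only: mult.assoc)
  then show "range_projection Q * (S * S) = Q * adj Q" unfolding P QS(1)[symmetric] using S(2) by simp
qed

lemma cabs_adj_add_cabs_one_minus:
  fixes Q :: "'a::cstar_algebra"
  assumes idem: "Q * Q = Q"
  shows "cabs (adj Q) + cabs (1 - Q) = cabs (Q + adj Q - 1)"
proof -
  define S where "S = Q + adj Q - 1"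
  define P where "P = range_projection Q"
  have saS: "adj S = S" unfolding S_def by (simp add: adj_add adj_diff adj_adj)
  note pT = cabs_self_adjoint(1)[OF saS] and TT = cabs_self_adjoint(2)[OF saS]
    and Tc = cabs_self_adjoint(3)[OF saS]
  note P = range_projection[OF idem, folded S_def P_def]
  have TP: "cabs S * P = P * cabs S" using Tc[of P] P(3,4) by simp
  have "cabs (adj Q) = cabs S * P"
    using P TT by (intro cabs_eq_mult_projection[OF pT P(1,2) TP]) (simp add: adj_adj)
  moreover have "cabs (1 - Q) = cabs S * (1 - P)"
  proof (rule cabs_eq_mult_projection[OF pT])
    show "adj (1 - P) = 1 - P" "(1 - P) * (1 - P) = 1 - P" "cabs S * (1 - P) = (1 - P) * cabs S"
      using P(1,2) TP by (simp_all add: adj_diff algebra_simps)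
    have "S * S * (1 - P) = S * S - Q * adj Q" using P(3) by (simp add: right_diff_distrib)
    also have "\<dots> = adj (1 - Q) * (1 - Q)"
      unfolding idempotent_adj_square[OF idem, folded S_def] by (simp add: algebra_simps adj_diff)
    finally show "cabs S * cabs S * (1 - P) = adj (1 - Q) * (1 - Q)" unfolding TT .
  qed
  ultimately show ?thesis unfolding S_def by (simp add: algebra_simps)
qed

theorem mainTheorem9:
  fixes Q :: "'a::cstar_algebra"
  assumes "Q * Q = Q"
  shows "cabs (adj Q) + cabs (1 - Q) = cabs Q + cabs (1 - adj Q)
    \<and> (cabs (adj Q) + cabs (1 - Q)) * (cabs (adj Q) + cabs (1 - Q))
        = 1 - Q - adj Q + Q * adj Q + adj Q * Q
    \<and> (cabs Q + cabs (1 - adj Q)) * (cabs Q + cabs (1 - adj Q))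
        = 1 - Q - adj Q + Q * adj Q + adj Q * Q"
proof -
  define S where "S = Q + adj Q - 1"
  have "cabs (adj Q) + cabs (1 - Q) = cabs S"
    unfolding S_def by (rule cabs_adj_add_cabs_one_minus[OF assms])
  moreover have "cabs Q + cabs (1 - adj Q) = cabs S"
    using cabs_adj_add_cabs_one_minus[OF idempotent_adj[OF assms]]
    unfolding S_def by (simp add: adj_adj add.commute)
  moreover have "cabs S * cabs S = 1 - Q - adj Q + Q * adj Q + adj Q * Q"
  proof -
    have "adj S = S" unfolding S_def by (simp add: adj_add adj_diff adj_adj)
    then have "cabs S * cabs S = S * S" by (rule cabs_self_adjoint(2))
    then show ?thesis unfolding S_def idempotent_adj_square[OF assms] .
  qed
  ultimately show ?thesis by simp
qed

end
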